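(* In the setting of the context, with $\alpha_k=\frac a{b+k}$, $a>0$, $b>1$, $\frac ab\le\frac1{2M\tilde L}$, put $t=2a\sigma_\ell^2$ and for $n\ge1$ let $T_n=\sum_{i=1}^nA_i^{(n)}C(\alpha_{i-1})$. If $t<1$ there is a constant $K$ independent of $n$ with $T_n\le K(b+n)^{-t}$ for all $n\ge1$; if $t>1$ there is a constant $K$ independent of $n$ with $T_n\le K(b+n)^{-1}$ for all $n\ge1$.
   Context: Standing setting: $M\ge N$, $A\in\mathbb{R}^{M\times N}$ of full column rank with rows $a_1,\dots,a_M$, right-hand side $(b_1,\dots,b_M)$, $F(x)=\frac12\|Ax-(b_1,\dots,b_M)^\top\|^2$, $F_*=\min F$; singular values $\sigma_1\ge\dots\ge\sigma_N>0$, $\tilde L=\max_i\|a_i\|^2$. Fix $\ell$. $C(\alpha)=2\alpha^2M\tilde LF_*$; for fixed $n$ and $0\le k\le n$, $A_k^{(n)}=\prod_{i=k}^n(1-2\alpha_i\sigma_\ell^2)$. (Step-size scalars $a,b$ are unrelated to $a_i,b_i$.) *)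

theory Defs
  imports "Jordan_Normal_Form.Char_Poly"
begin

definition full_col_rank :: "real mat \<Rightarrow> bool" where
  "full_col_rank A \<longleftrightarrow>
     (\<forall>x \<in> carrier_vec (dim_col A). A *\<^sub>v x = 0\<^sub>v (dim_row A) \<longrightarrow> x = 0\<^sub>v (dim_col A))"

text \<open>sigma 0 >= sigma 1 >= ... >= sigma (N-1) >= 0 are the singular values of A (with multiplicity),
  i.e. their squares are the eigenvalues (with multiplicity) of A^T A.
  (0-based: sigma i here is sigma_{i+1} of the paper.)\<close>
definition singular_values :: "real mat \<Rightarrow> (nat \<Rightarrow> real) \<Rightarrow> bool" where
  "singular_values A \<sigma> \<longleftrightarrow>
     (\<forall>i < dim_col A. \<sigma> i \<ge> 0) \<and>
     (\<forall>i j. i \<le> j \<longrightarrow> j < dim_col A \<longrightarrow> \<sigma> j \<le> \<sigma> i) \<and>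
     char_poly (transpose_mat A * A) = (\<Prod>i<dim_col A. [: - ((\<sigma> i)^2), 1 :])"

definition LSobj :: "real mat \<Rightarrow> real vec \<Rightarrow> real vec \<Rightarrow> real" where
  "LSobj A b x = (1/2) * (\<Sum>i<dim_row A. ((A *\<^sub>v x) $ i - b $ i)^2)"

definition Fstar :: "real mat \<Rightarrow> real vec \<Rightarrow> real" where
  "Fstar A b = (INF x \<in> carrier_vec (dim_col A). LSobj A b x)"

definition Ltil :: "real mat \<Rightarrow> real" where
  "Ltil A = Max ((\<lambda>i. \<Sum>j<dim_col A. (A $$ (i,j))^2) ` {..<dim_row A})"

definition Cconst :: "real mat \<Rightarrow> real vec \<Rightarrow> real \<Rightarrow> real" where
  "Cconst A b \<alpha> = 2 * \<alpha>^2 * real (dim_row A) * Ltil A * Fstar A b"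

definition Aprod :: "(nat \<Rightarrow> real) \<Rightarrow> real \<Rightarrow> nat \<Rightarrow> nat \<Rightarrow> real" where
  "Aprod \<alpha> s k n = (\<Prod>i=k..n. 1 - 2 * \<alpha> i * s^2)"

end

theory Submission
  imports Defs "HOL-Analysis.Convex"
begin

text \<open>Put t = 2 a sigma_l^2. Since sigma_l^2 <= M L (Rayleigh quotient of A^T A and Cauchy-Schwarz
  on the rows), the step-size condition gives t <= c, so the factors 1 - t/(c+j) of A_i^(n) are
  nonnegative; 1 - x <= exp(-x) together with ln (1 + 1/y) <= 1/y telescopes their product to at most
  ((c+i)/(c+n))^t. As C(alpha_(i-1)) is of order (c+i)^(-2), this gives
  T_n <= K (c+n)^(-t) * sum_i (c+i)^(t-2). Comparing (c+i)^(t-2) with the increments of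
  (c+i)^(t-1) shows that the sum is bounded for t < 1 and O((c+n)^(t-1)) for t > 1.\<close>

lemma eigenvalue_transpose_mult_singular_value:
  fixes A :: "real mat"
  assumes A: "A \<in> carrier_mat M N" and sv: "singular_values A \<sigma>" and l: "l < N"
  shows "eigenvalue (transpose_mat A * A) ((\<sigma> l)^2)"
proof -
  have B: "transpose_mat A * A \<in> carrier_mat N N" using A by auto
  have "poly (char_poly (transpose_mat A * A)) ((\<sigma> l)^2)
        = (\<Prod>i<N. poly [: - ((\<sigma> i)^2), 1 :] ((\<sigma> l)^2))"
    using sv A unfolding singular_values_def by (simp add: poly_prod)
  also have "\<dots> = 0" using l by (intro prod_zero) auto
  finally show ?thesis using eigenvalue_root_char_poly[OF B] by simp
qed

lemma scalar_prod_mult_vec_le_Ltil: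
  fixes A :: "real mat"
  assumes A: "A \<in> carrier_mat M N" and v: "v \<in> carrier_vec N"
  shows "(A *\<^sub>v v) \<bullet> (A *\<^sub>v v) \<le> real M * Ltil A * (v \<bullet> v)"
proof -
  have vv: "v \<bullet> v = (\<Sum>j<N. (v $ j)^2)"
    using v by (simp add: scalar_prod_def power2_eq_square lessThan_atLeast0)
  have row: "((A *\<^sub>v v) $ i)^2 \<le> Ltil A * (v \<bullet> v)" if i: "i < M" for i
  proof -
    have "(A *\<^sub>v v) $ i = (\<Sum>j<N. A $$ (i,j) * v $ j)"
      using A v i by (simp add: scalar_prod_def lessThan_atLeast0)
    hence "((A *\<^sub>v v) $ i)^2 \<le> (\<Sum>j<N. (A $$ (i,j))^2) * (v \<bullet> v)"
      unfolding vv using Cauchy_Schwarz_ineq_sum by simp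
    also have "\<dots> \<le> Ltil A * (v \<bullet> v)"
      using A i unfolding Ltil_def vv by (intro mult_right_mono Max_ge sum_nonneg) auto
    finally show ?thesis .
  qed
  have "(A *\<^sub>v v) \<bullet> (A *\<^sub>v v) = (\<Sum>i<M. ((A *\<^sub>v v) $ i)^2)"
    using A by (simp add: scalar_prod_def power2_eq_square lessThan_atLeast0)
  also have "\<dots> \<le> (\<Sum>i<M. Ltil A * (v \<bullet> v))" by (intro sum_mono row) auto
  finally show ?thesis by simp
qed

lemma singular_value_sq_le_Ltil:
  fixes A :: "real mat"
  assumes A: "A \<in> carrier_mat M N" and sv: "singular_values A \<sigma>" and l: "l < N"
  shows "(\<sigma> l)^2 \<le> real M * Ltil A"
proof -
  let ?s = "(\<sigma> l)^2"
  obtain v where v: "v \<in> carrier_vec N" "v \<noteq> 0\<^sub>v N" "(transpose_mat A * A) *\<^sub>v v = ?s \<cdot>\<^sub>v v"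
    using eigenvalue_transpose_mult_singular_value[OF A sv l] A
    unfolding eigenvalue_def eigenvector_def by auto
  have Av: "A *\<^sub>v v \<in> carrier_vec M" using A v by auto
  have "?s * (v \<bullet> v) = ((transpose_mat A * A) *\<^sub>v v) \<bullet> v" using v by simp
  also have "\<dots> = (transpose_mat A *\<^sub>v (A *\<^sub>v v)) \<bullet> v"
    using A v by (simp add: assoc_mult_mat_vec)
  also have "\<dots> = (A *\<^sub>v v) \<bullet> (A *\<^sub>v v)"
    using A v Av by (intro transpose_vec_mult_scalar) auto
  also have "\<dots> \<le> real M * Ltil A * (v \<bullet> v)" by (rule scalar_prod_mult_vec_le_Ltil[OF A v(1)])
  finally have "?s * (v \<bullet> v) \<le> real M * Ltil A * (v \<bullet> v)" .
  moreover have "v \<bullet> v > 0" using conjugate_square_greater_0_vec[OF v(1)] v(2) by simp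
  ultimately show ?thesis by simp
qed

lemma one_minus_div_le_powr:
  fixes y t :: real
  assumes y: "y > 0" and t: "0 \<le> t"
  shows "1 - t / y \<le> (y / (y + 1)) powr t"
proof -
  have "ln (1 + 1/y) \<le> 1/y" using y by (intro ln_add_one_self_le_self) simp
  hence "- (t / y) \<le> - (t * ln (1 + 1/y))" using mult_left_mono[OF _ t] by fastforce
  moreover have "(y / (y + 1)) powr t = exp (- (t * ln (1 + 1/y)))"
  proof -
    have "y / (y + 1) = inverse (1 + 1/y)" using y by (simp add: field_simps)
    moreover have "1 + 1/y > 0" using y by (simp add: add_pos_pos)
    ultimately show ?thesis by (simp add: powr_def ln_inverse)
  qed
  ultimately show ?thesis using exp_ge_add_one_self[of "- (t / y)"] by (simp add: order_trans)
qed

lemma prod_one_minus_div_le_powr: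
  fixes c t :: real
  assumes c: "c > 0" and t: "0 \<le> t" "t \<le> c" and i: "i \<le> n"
  shows "(\<Prod>j=i..n. 1 - t / (c + real j)) \<le> ((c + real i) / (c + real n + 1)) powr t"
  using i
proof (induction n rule: dec_induct)
  case base
  show ?case using one_minus_div_le_powr[of "c + real i" t] c t by simp
next
  case (step n)
  have "(\<Prod>j=i..Suc n. 1 - t / (c + real j))
        = (1 - t / (c + real n + 1)) * (\<Prod>j=i..n. 1 - t / (c + real j))"
    using step by (simp add: prod.nat_ivl_Suc' add.assoc)
  also have "\<dots> \<le> ((c + real n + 1) / (c + real n + 2)) powr t
                 * ((c + real i) / (c + real n + 1)) powr t"
    using one_minus_div_le_powr[of "c + real n + 1" t] c t step.IH
    by (intro mult_mono prod_nonneg) (auto simp: field_simps)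
  also have "\<dots> = ((c + real i) / (c + real (Suc n) + 1)) powr t"
    using c by (simp add: powr_mult[symmetric] add_pos_nonneg add_ac)
  finally show ?case .
qed

lemma Aprod_harmonic_le_powr:
  fixes a c s :: real
  assumes step: "\<And>k. \<alpha> k = a / (c + real k)"
    and c: "c > 0" and t: "0 \<le> 2 * a * s^2" "2 * a * s^2 \<le> c" and i: "i \<le> n"
  shows "0 \<le> Aprod \<alpha> s i n"
    and "Aprod \<alpha> s i n \<le> ((c + real i) / (c + real n)) powr (2 * a * s^2)"
proof -
  let ?t = "2 * a * s^2"
  have A: "Aprod \<alpha> s i n = (\<Prod>j=i..n. 1 - ?t / (c + real j))"
    unfolding Aprod_def step by (intro prod.cong) auto
  show "0 \<le> Aprod \<alpha> s i n"
    unfolding A using c t by (intro prod_nonneg) (auto simp: field_simps)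
  have "Aprod \<alpha> s i n \<le> ((c + real i) / (c + real n + 1)) powr ?t"
    unfolding A using c t i by (rule prod_one_minus_div_le_powr)
  also have "\<dots> \<le> ((c + real i) / (c + real n)) powr ?t"
    using c t by (intro powr_mono2 divide_left_mono mult_pos_pos) auto
  finally show "Aprod \<alpha> s i n \<le> ((c + real i) / (c + real n)) powr ?t" .
qed

lemma powr_ratio_mult_step_sq_le:
  fixes a c t :: real
  assumes c: "c > 1" and t: "0 \<le> t" and i: "1 \<le> i"
  shows "((c + real i) / (c + real n)) powr t * (a / (c + real (i - 1)))^2
         \<le> 4 * a^2 * (c + real n) powr (- t) * (c + real i) powr (t - 2)"
proof -
  have ci: "c + real i > 0" "c + real n > 0" using c by auto
  have "1 / (c + real i - 1) \<le> 2 / (c + real i)" using c i by (simp add: field_simps)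
  hence "(1 / (c + real i - 1))^2 \<le> (2 / (c + real i))^2"
    by (rule power_mono) (use c in simp)
  hence q: "1 / (c + real i - 1)^2 \<le> 4 / (c + real i)^2" by (simp add: power_divide)
  have ratio: "((c + real i) / (c + real n)) powr t = (c + real n) powr (- t) * (c + real i) powr t"
    using ci by (subst powr_divide) (auto simp: powr_minus divide_inverse)
  have step: "(a / (c + real (i - 1)))^2 = a^2 * (1 / (c + real i - 1)^2)"
    using i by (simp add: power_divide of_nat_diff algebra_simps)
  have "((c + real i) / (c + real n)) powr t * (a / (c + real (i - 1)))^2
      = a^2 * (c + real n) powr (- t) * ((c + real i) powr t * (1 / (c + real i - 1)^2))"
    unfolding ratio step by (simp only: mult_ac)
  also have "\<dots> \<le> a^2 * (c + real n) powr (- t) * ((c + real i) powr t * (4 / (c + real i)^2))"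
    using q by (intro mult_left_mono) auto
  also have "\<dots> = 4 * a^2 * (c + real n) powr (- t) * ((c + real i) powr t / (c + real i)^2)"
    by simp
  also have "(c + real i) powr t / (c + real i)^2 = (c + real i) powr (t - 2)"
    using ci by (simp add: powr_diff powr_numeral)
  finally show ?thesis .
qed

lemma weighted_sum_Aprod_le:
  fixes a c s D :: real
  assumes step: "\<And>k. \<alpha> k = a / (c + real k)"
    and c: "c > 1" and t: "0 \<le> 2 * a * s^2" "2 * a * s^2 \<le> c"
  shows "(\<Sum>i=1..n. Aprod \<alpha> s i n * (D * (\<alpha> (i - 1))^2))
         \<le> 4 * a^2 * \<bar>D\<bar> * (c + real n) powr (- (2 * a * s^2))
           * (\<Sum>i=1..n. (c + real i) powr (2 * a * s^2 - 2))"
proof -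
  let ?t = "2 * a * s^2"
  have "(\<Sum>i=1..n. Aprod \<alpha> s i n * (D * (\<alpha> (i - 1))^2))
        \<le> (\<Sum>i=1..n. \<bar>D\<bar> * (4 * a^2 * (c + real n) powr (- ?t) * (c + real i) powr (?t - 2)))"
  proof (intro sum_mono)
    fix i assume i: "i \<in> {1..n}"
    note Aprod = Aprod_harmonic_le_powr[OF step _ t, of i n]
    have "Aprod \<alpha> s i n * (D * (\<alpha> (i - 1))^2) \<le> Aprod \<alpha> s i n * (\<bar>D\<bar> * (\<alpha> (i - 1))^2)"
      using Aprod(1) c i by (intro mult_left_mono) (auto simp: mult_right_mono)
    also have "\<dots> \<le> ((c + real i) / (c + real n)) powr ?t * (\<bar>D\<bar> * (\<alpha> (i - 1))^2)"
      using Aprod(2) c i by (intro mult_right_mono) auto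
    also have "\<dots> \<le> \<bar>D\<bar> * (4 * a^2 * (c + real n) powr (- ?t) * (c + real i) powr (?t - 2))"
      using powr_ratio_mult_step_sq_le[OF c t(1), of i n a] i
      unfolding step by (simp add: mult_left_mono mult.left_commute)
    finally show "Aprod \<alpha> s i n * (D * (\<alpha> (i - 1))^2)
      \<le> \<bar>D\<bar> * (4 * a^2 * (c + real n) powr (- ?t) * (c + real i) powr (?t - 2))" .
  qed
  also have "\<dots> = 4 * a^2 * \<bar>D\<bar> * (c + real n) powr (- ?t) * (\<Sum>i=1..n. (c + real i) powr (?t - 2))"
    by (simp add: sum_distrib_left mult_ac)
  finally show ?thesis .
qed

text \<open>Both increment bounds are (1 - 1/y)^p <= 1 - p/y for 0 < p < 1 (concavity) and
  (1 - 1/y)^q >= 1 - q/y for q < 0 (convexity), multiplied by y^p resp. y^q.\<close>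

lemma powr_increment_ge_concave:
  fixes p y :: real
  assumes p: "0 < p" "p < 1" and y: "y > 1"
  shows "p * y powr (p - 1) \<le> y powr p - (y - 1) powr p"
proof -
  have "((y - 1) / y) powr p * 1 powr (1 - p) \<le> p * ((y - 1) / y) + (1 - p) * 1"
    using p y by (intro Youngs_inequality_0) auto
  hence "(y - 1) powr p / y powr p \<le> 1 - p / y" using y by (simp add: powr_divide field_simps)
  hence "(y - 1) powr p \<le> y powr p - p * (y powr p / y)" using y by (simp add: field_simps)
  thus ?thesis using y by (simp add: powr_diff)
qed

lemma powr_increment_ge_neg:
  fixes q y :: real
  assumes q: "q < 0" and y: "y > 1"
  shows "- q * y powr (q - 1) \<le> (y - 1) powr q - y powr q"
proof -
  have y0: "(y - 1) / y > 0" using y by simp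
  have "ln ((y - 1) / y) \<le> - (1 / y)" using ln_le_minus_one[OF y0] y by (simp add: field_simps)
  hence "q * (- (1 / y)) \<le> q * ln ((y - 1) / y)" using q by (intro mult_left_mono_neg) auto
  hence "- (q / y) \<le> q * ln ((y - 1) / y)" by simp
  hence "1 - q / y \<le> exp (q * ln ((y - 1) / y))"
    using exp_ge_add_one_self[of "q * ln ((y - 1) / y)"] by linarith
  hence "1 - q / y \<le> (y - 1) powr q / y powr q"
    using y y0 by (simp add: powr_def[of "(y - 1) / y"] powr_divide[symmetric])
  hence "y powr q - q * (y powr q / y) \<le> (y - 1) powr q" using y by (simp add: field_simps)
  thus ?thesis using y by (simp add: powr_diff)
qed

lemma sum_powr_le_concave:
  fixes p c :: real
  assumes p: "0 < p" "p < 1" and c: "c > 0"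
  shows "(\<Sum>i=1..n. (c + real i) powr (p - 1)) \<le> ((c + real n) powr p - c powr p) / p"
proof (induction n)
  case (Suc n)
  have "p * (c + real n + 1) powr (p - 1) \<le> (c + real n + 1) powr p - (c + real n) powr p"
    using powr_increment_ge_concave[OF p, of "c + real n + 1"] c by simp
  with Suc p show ?case by (simp add: field_simps)
qed simp

lemma sum_powr_le_neg:
  fixes q c :: real
  assumes q: "q < 0" and c: "c > 0"
  shows "(\<Sum>i=1..n. (c + real i) powr (q - 1)) \<le> (c powr q - (c + real n) powr q) / (- q)"
proof (induction n)
  case (Suc n)
  have "- q * (c + real n + 1) powr (q - 1) \<le> (c + real n) powr q - (c + real n + 1) powr q"
    using powr_increment_ge_neg[OF q, of "c + real n + 1"] c by simp
  with Suc q show ?case by (simp add: field_simps)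
qed simp

lemma sum_powr_diff_two_le_of_lt_one:
  fixes c t :: real
  assumes t: "t < 1" and c: "c > 0"
  shows "(\<Sum>i=1..n. (c + real i) powr (t - 2)) \<le> c powr (t - 1) / (1 - t)"
proof -
  have "(\<Sum>i=1..n. (c + real i) powr ((t - 1) - 1))
        \<le> (c powr (t - 1) - (c + real n) powr (t - 1)) / (1 - t)"
    using sum_powr_le_neg[of "t - 1" c n] t c by simp
  also have "\<dots> \<le> c powr (t - 1) / (1 - t)" using t by (intro divide_right_mono) auto
  finally show ?thesis by (simp add: algebra_simps)
qed

lemma sum_powr_diff_two_le_of_gt_one:
  fixes c t :: real
  assumes t: "t > 1" and c: "c > 0"
  shows "(\<Sum>i=1..n. (c + real i) powr (t - 2)) \<le> max 1 (1 / (t - 1)) * (c + real n) powr (t - 1)"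
proof (cases "t \<ge> 2")
  case True
  have "(\<Sum>i=1..n. (c + real i) powr (t - 2)) \<le> (\<Sum>i=1..n. (c + real n) powr (t - 2))"
    using True c by (intro sum_mono powr_mono2) auto
  also have "\<dots> \<le> (c + real n) * (c + real n) powr (t - 2)"
    using c by (simp add: mult_right_mono)
  also have "\<dots> = (c + real n) powr (t - 1)"
    using c powr_add[of "c + real n" 1 "t - 2"] by simp
  also have "\<dots> \<le> max 1 (1 / (t - 1)) * (c + real n) powr (t - 1)"
    using mult_right_mono[of 1 "max 1 (1 / (t - 1))" "(c + real n) powr (t - 1)"] by simp
  finally show ?thesis .
next
  case False
  have "(\<Sum>i=1..n. (c + real i) powr ((t - 1) - 1))
        \<le> ((c + real n) powr (t - 1) - c powr (t - 1)) / (t - 1)"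
    using False t c by (intro sum_powr_le_concave) auto
  also have "\<dots> \<le> (c + real n) powr (t - 1) / (t - 1)" using t by (intro divide_right_mono) auto
  also have "\<dots> \<le> max 1 (1 / (t - 1)) * (c + real n) powr (t - 1)"
    using mult_right_mono[of "1 / (t - 1)" "max 1 (1 / (t - 1))" "(c + real n) powr (t - 1)"]
    by simp
  finally show ?thesis by (simp add: algebra_simps)
qed

theorem lemma17:
  fixes A :: "real mat" and b :: "real vec" and M N :: nat
    and \<sigma> :: "nat \<Rightarrow> real" and l :: nat and a c :: real
    and \<alpha> :: "nat \<Rightarrow> real" and T :: "nat \<Rightarrow> real"
  assumes dims: "A \<in> carrier_mat M N" "b \<in> carrier_vec M" "M \<ge> N" "N > 0"
    and rank: "full_col_rank A"
    and sv: "singular_values A \<sigma>" "\<sigma> (N - 1) > 0"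
    and l: "l < N"
    and step: "\<And>k. \<alpha> k = a / (c + real k)"
    and a: "a > 0" and c: "c > 1" and ab: "a / c \<le> 1 / (2 * real M * Ltil A)"
    and T: "\<And>n. T n = (\<Sum>i=1..n. Aprod \<alpha> (\<sigma> l) i n * Cconst A b (\<alpha> (i - 1)))"
  shows "(2 * a * (\<sigma> l)^2 < 1 \<longrightarrow>
            (\<exists>K. \<forall>n \<ge> 1. T n \<le> K * (c + real n) powr (- (2 * a * (\<sigma> l)^2))))
       \<and> (2 * a * (\<sigma> l)^2 > 1 \<longrightarrow>
            (\<exists>K. \<forall>n \<ge> 1. T n \<le> K * (c + real n) powr (- 1)))"
proof -
  define t where "t = 2 * a * (\<sigma> l)^2"
  define E where "E = 4 * a^2 * \<bar>2 * real M * Ltil A * Fstar A b\<bar>"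
  have sML: "(\<sigma> l)^2 \<le> real M * Ltil A" by (rule singular_value_sq_le_Ltil[OF dims(1) sv(1) l])
  have "\<sigma> (N - 1) \<le> \<sigma> l" using sv(1) l dims(1) unfolding singular_values_def by auto
  hence "0 < (\<sigma> l)^2" using sv(2) by simp
  with sML have "real M * Ltil A > 0" by linarith
  with ab c have "2 * a * (real M * Ltil A) \<le> c" by (simp add: field_simps)
  with a sML have t: "0 \<le> t" "t \<le> c"
    unfolding t_def by (auto intro: order_trans[OF mult_left_mono])
  have "Cconst A b x = 2 * real M * Ltil A * Fstar A b * x^2" for x
    unfolding Cconst_def using dims(1) by simp
  hence T_le: "T n \<le> E * (c + real n) powr (- t) * (\<Sum>i=1..n. (c + real i) powr (t - 2))" for n
    using weighted_sum_Aprod_le[OF step c t[unfolded t_def]] unfolding T E_def t_def by simp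
  have E: "0 \<le> E * (c + real n) powr (- t)" for n unfolding E_def by simp
  have "T n \<le> (E * (c powr (t - 1) / (1 - t))) * (c + real n) powr (- t)" if "t < 1" for n
    using T_le[of n] mult_left_mono[OF sum_powr_diff_two_le_of_lt_one[OF that, of c n] E[of n]] c
    by (simp add: mult_ac)
  moreover have "T n \<le> (E * max 1 (1 / (t - 1))) * (c + real n) powr (- 1)" if "t > 1" for n
  proof -
    have "(c + real n) powr (- t) * (c + real n) powr (t - 1) = (c + real n) powr (- 1)"
      by (simp add: powr_add[symmetric])
    thus ?thesis
      using T_le[of n] mult_left_mono[OF sum_powr_diff_two_le_of_gt_one[OF that, of c n] E[of n]] c
      by (simp add: mult_ac)
  qed
  ultimately show ?thesis unfolding t_def by blast
qed

end
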